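(* Let $G$ be a finite group and let $M,N$ be normal subgroups with $1<M\le N<G$ such that every $g\in G\setminus N$ is conjugate in $G$ to every element of $gM$. If $x\in G\setminus N$ has order $m$ and $y\in C_M(x)$, then the order of $y$ divides $m$. *)

theory Defs
  imports "HOL-Algebra.Algebra"
begin

definition conjugate_in :: "('a, 'b) monoid_scheme \<Rightarrow> 'a \<Rightarrow> 'a \<Rightarrow> bool" where
  "conjugate_in G a b \<longleftrightarrow> (\<exists>h \<in> carrier G. b = h \<otimes>\<^bsub>G\<^esub> a \<otimes>\<^bsub>G\<^esub> inv\<^bsub>G\<^esub> h)"

definition centralizer_in :: "('a, 'b) monoid_scheme \<Rightarrow> 'a set \<Rightarrow> 'a \<Rightarrow> 'a set" where
  "centralizer_in G M x = {y \<in> M. x \<otimes>\<^bsub>G\<^esub> y = y \<otimes>\<^bsub>G\<^esub> x}"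

end

theory Submission
  imports Defs
begin

text \<open>Since \<open>y\<close> commutes with \<open>x\<close>, \<open>(xy)\<^sup>m = x\<^sup>m y\<^sup>m = y\<^sup>m\<close> for \<open>m = ord x\<close>. The hypothesis
  makes \<open>xy \<in> xM\<close> conjugate to \<open>x\<close>, so \<open>xy\<close> also has order \<open>m\<close>, whence \<open>y\<^sup>m = 1\<close>.\<close>

lemma (in group) nat_pow_conj:
  assumes "h \<in> carrier G" "a \<in> carrier G"
  shows "(h \<otimes> a \<otimes> inv h) [^] (n::nat) = h \<otimes> a [^] n \<otimes> inv h"
proof (induction n)
  case 0
  then show ?case using assms by simp
next
  case (Suc n)
  have "(h \<otimes> a \<otimes> inv h) [^] Suc n = (h \<otimes> a [^] n \<otimes> inv h) \<otimes> (h \<otimes> a \<otimes> inv h)"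
    using Suc by simp
  also have "\<dots> = h \<otimes> (a [^] n \<otimes> a) \<otimes> inv h"
    using assms by (simp add: m_assoc flip: m_assoc[of "inv h" h])
  finally show ?case by simp
qed

lemma (in group) conj_eq_one_iff:
  assumes "h \<in> carrier G" "b \<in> carrier G"
  shows "h \<otimes> b \<otimes> inv h = \<one> \<longleftrightarrow> b = \<one>"
proof
  assume "h \<otimes> b \<otimes> inv h = \<one>"
  then have "h \<otimes> b = h"
    using assms by (metis inv_closed inv_inv m_closed inv_equality)
  then show "b = \<one>"
    using assms by (metis l_cancel_one')
qed (use assms in simp)

lemma (in group) ord_conj:
  assumes "h \<in> carrier G" "a \<in> carrier G"
  shows "ord (h \<otimes> a \<otimes> inv h) = ord a"
proof -
  have "ord (h \<otimes> a \<otimes> inv h) dvd n \<longleftrightarrow> ord a dvd n" for n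
  proof -
    have "ord (h \<otimes> a \<otimes> inv h) dvd n \<longleftrightarrow> (h \<otimes> a \<otimes> inv h) [^] n = \<one>"
      using assms by (simp add: pow_eq_id)
    also have "\<dots> \<longleftrightarrow> a [^] n = \<one>"
      using assms by (simp add: nat_pow_conj conj_eq_one_iff)
    also have "\<dots> \<longleftrightarrow> ord a dvd n"
      using assms(2) by (rule pow_eq_id)
    finally show ?thesis .
  qed
  then show ?thesis by (meson dvd_antisym dvd_refl)
qed

lemma (in group) ord_dvd_if_conjugate_to_commuting_product:
  assumes "x \<in> carrier G" "y \<in> carrier G" "x \<otimes> y = y \<otimes> x"
    and "conjugate_in G x (x \<otimes> y)"
  shows "ord y dvd ord x"
proof -
  from assms(4) obtain h where "h \<in> carrier G" "x \<otimes> y = h \<otimes> x \<otimes> inv h"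
    by (auto simp: conjugate_in_def)
  with assms(1) have "ord (x \<otimes> y) = ord x" by (simp add: ord_conj)
  then have "(x \<otimes> y) [^] ord x = \<one>"
    using assms(1,2) pow_eq_id by simp
  moreover have "x [^] ord x = \<one>"
    using assms(1) pow_eq_id by simp
  ultimately have "y [^] ord x = \<one>"
    using assms(1,2) by (simp add: pow_mult_distrib[OF assms(3)])
  then show ?thesis
    using assms(2) pow_eq_id by simp
qed

theorem mainTheorem12:
  fixes G (structure) and M N :: "'a set" and x y :: 'a
  assumes "group G" and "finite (carrier G)"
    and "M \<lhd> G" and "N \<lhd> G"
    and "M \<noteq> {\<one>}" and "M \<subseteq> N" and "N \<noteq> carrier G"
    and "\<forall>g \<in> carrier G - N. \<forall>g' \<in> g <# M. conjugate_in G g g'"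
    and "x \<in> carrier G - N" and "y \<in> centralizer_in G M x"
  shows "group.ord G y dvd group.ord G x"
proof -
  interpret group G by fact
  have "y \<in> M" and comm: "x \<otimes> y = y \<otimes> x"
    using assms(10) by (auto simp: centralizer_in_def)
  moreover have "M \<subseteq> carrier G"
    using assms(3) by (simp add: normal_def subgroup_def)
  ultimately have "y \<in> carrier G" by blast
  have "x \<otimes> y \<in> x <# M"
    using \<open>y \<in> M\<close> by (auto simp: l_coset_def)
  then have "conjugate_in G x (x \<otimes> y)"
    using assms(8,9) by blast
  with assms(9) \<open>y \<in> carrier G\<close> comm show ?thesis
    by (intro ord_dvd_if_conjugate_to_commuting_product) auto
qed

end
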